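(* Let $M_0>0$, $M>M_0$, let $r=r(M_0,M)>0$ be as in the local existence theorem, and let $(A,\tau)$ be the solution on $[0,r]$ of system (1.1) with initial distribution $(\varphi,\tau_0)\in\mathrm{Lip}_\alpha\times C_+(\Omega)$ satisfying $\|\varphi\|_{\mathrm{Lip}_\alpha}+\|\tau_0\|_\infty\le M_0$ (so that $\|A(t,\cdot)\|_\infty\le M$ on $[0,r]$). Then $A_t\in\mathrm{Lip}_\alpha$ for every $t\in[0,r]$, and there exists a constant $\widehat M>M$, depending only on $M_0$, $M$, $\alpha$ and the data $F,f$ (through the bound $\tau_{\max}$ on the delay), such that $\|A_t\|_{\mathrm{Lip}_\alpha}\le\widehat M$ for all $t\in[0,r]$.
   Context: $\Omega\subset\mathbb R^n$ compact, $C(\Omega)$ with sup norm, $\alpha\ge0$ fixed. Standing assumption: $F:C(\Omega)\times C(\Omega)\times C(\Omega^2)\to C(\Omega)$ is Lipschitz on bounded sets; $f:C(\Omega)\to C(\Omega)$ is Lipschitz, $0<f(\phi)(x)\le M_f$ for a constant $M_f$, non-increasing for the pointwise order. $\mathrm{Lip}_\alpha$: $\phi\in C((-\infty,0],C(\Omega))$ with $\theta\mapsto e^{-\alpha|\theta|}\phi(\theta)$ bounded and Lipschitz, norm = sup norm + Lipschitz seminorm of that map. $A_t(\theta):=A(t+\theta)$, $\theta\le0$. Local existence theorem: for $M>M_0>0$ there is $r(M_0,M)>0$ such that for every such initial distribution, (1.1) has a unique solution on $[0,r]$, namely continuous $A:(-\infty,r]\to C(\Omega)$, $\tau:[0,r]\to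 C_+(\Omega)$ with $A=\varphi$ on $(-\infty,0]$, $A(t,x)=\varphi(0,x)+\int_0^tF(A(l,\cdot),\tau(l,\cdot),A(l-\tau(l)))(x)dl$ (with $A(l-\tau(l))(x,y)=A(l-\tau(l,x),y)$) and $\int_{t-\tau(t,x)}^tf(A(s,\cdot))(x)ds=\int_{-\tau_0(x)}^0f(\varphi(s,\cdot))(x)ds$, and $\|A(t,\cdot)\|_\infty\le M$ on $[0,r]$. *)

theory Defs
  imports "HOL-Analysis.Analysis"
begin

text \<open>Elements of C(S) are represented by functions continuous on S; only their
values on S matter. Sup norm over S (0 for empty S).\<close>

definition supnorm :: "'b set \<Rightarrow> ('b \<Rightarrow> real) \<Rightarrow> real" where
  "supnorm S u = (if S = {} then 0 else (SUP x\<in>S. \<bar>u x\<bar>))"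

definition cfun :: "'b::topological_space set \<Rightarrow> ('b \<Rightarrow> real) set" where
  "cfun S = {u. continuous_on S u}"

definition cont_sup :: "'b::topological_space set \<Rightarrow> real set \<Rightarrow> (real \<Rightarrow> 'b \<Rightarrow> real) \<Rightarrow> bool" where
  "cont_sup S T A \<longleftrightarrow> (\<forall>t\<in>T. A t \<in> cfun S) \<and>
     (\<forall>t\<in>T. \<forall>\<epsilon>>0. \<exists>\<delta>>0. \<forall>s\<in>T. \<bar>s - t\<bar> < \<delta> \<longrightarrow> supnorm S (\<lambda>x. A s x - A t x) < \<epsilon>)"

definition wt :: "real \<Rightarrow> (real \<Rightarrow> 'b \<Rightarrow> real) \<Rightarrow> real \<Rightarrow> 'b \<Rightarrow> real" where
  "wt \<alpha> \<phi> \<theta> = (\<lambda>x. exp (- \<alpha> * \<bar>\<theta>\<bar>) * \<phi> \<theta> x)"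

definition in_Lip :: "'b::topological_space set \<Rightarrow> real \<Rightarrow> (real \<Rightarrow> 'b \<Rightarrow> real) \<Rightarrow> bool" where
  "in_Lip S \<alpha> \<phi> \<longleftrightarrow> cont_sup S {..0} \<phi> \<and>
     (\<exists>B. \<forall>\<theta>\<le>0. supnorm S (wt \<alpha> \<phi> \<theta>) \<le> B) \<and>
     (\<exists>L. \<forall>\<theta>\<le>0. \<forall>\<theta>'\<le>0.
        supnorm S (\<lambda>x. wt \<alpha> \<phi> \<theta> x - wt \<alpha> \<phi> \<theta>' x) \<le> L * \<bar>\<theta> - \<theta>'\<bar>)"

definition Lip_norm :: "'b set \<Rightarrow> real \<Rightarrow> (real \<Rightarrow> 'b \<Rightarrow> real) \<Rightarrow> real" where
  "Lip_norm S \<alpha> \<phi> =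
     (SUP \<theta>\<in>{..0}. supnorm S (wt \<alpha> \<phi> \<theta>)) +
     (SUP p\<in>{p::real\<times>real. fst p \<le> 0 \<and> snd p \<le> 0 \<and> fst p \<noteq> snd p}.
        supnorm S (\<lambda>x. wt \<alpha> \<phi> (fst p) x - wt \<alpha> \<phi> (snd p) x) / \<bar>fst p - snd p\<bar>)"

definition F_ok :: "'b::topological_space set \<Rightarrow>
   (('b \<Rightarrow> real) \<Rightarrow> ('b \<Rightarrow> real) \<Rightarrow> ('b \<times> 'b \<Rightarrow> real) \<Rightarrow> ('b \<Rightarrow> real)) \<Rightarrow> bool" where
  "F_ok \<Omega> F \<longleftrightarrow>
     (\<forall>u\<in>cfun \<Omega>. \<forall>v\<in>cfun \<Omega>. \<forall>w\<in>cfun (\<Omega> \<times> \<Omega>). F u v w \<in> cfun \<Omega>) \<and>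
     (\<forall>B. \<exists>L. \<forall>u\<in>cfun \<Omega>. \<forall>v\<in>cfun \<Omega>. \<forall>w\<in>cfun (\<Omega> \<times> \<Omega>).
                \<forall>u'\<in>cfun \<Omega>. \<forall>v'\<in>cfun \<Omega>. \<forall>w'\<in>cfun (\<Omega> \<times> \<Omega>).
        supnorm \<Omega> u \<le> B \<longrightarrow> supnorm \<Omega> v \<le> B \<longrightarrow> supnorm (\<Omega> \<times> \<Omega>) w \<le> B \<longrightarrow>
        supnorm \<Omega> u' \<le> B \<longrightarrow> supnorm \<Omega> v' \<le> B \<longrightarrow> supnorm (\<Omega> \<times> \<Omega>) w' \<le> B \<longrightarrow>
        supnorm \<Omega> (\<lambda>x. F u v w x - F u' v' w' x)
          \<le> L * (supnorm \<Omega> (\<lambda>x. u x - u' x) + supnorm \<Omega> (\<lambda>x. v x - v' x)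
                 + supnorm (\<Omega> \<times> \<Omega>) (\<lambda>p. w p - w' p)))"

definition f_ok :: "'b::topological_space set \<Rightarrow> (('b \<Rightarrow> real) \<Rightarrow> ('b \<Rightarrow> real)) \<Rightarrow> real \<Rightarrow> bool" where
  "f_ok \<Omega> f Mf \<longleftrightarrow>
     (\<forall>u\<in>cfun \<Omega>. f u \<in> cfun \<Omega> \<and> (\<forall>x\<in>\<Omega>. 0 < f u x \<and> f u x \<le> Mf)) \<and>
     (\<exists>L. \<forall>u\<in>cfun \<Omega>. \<forall>v\<in>cfun \<Omega>.
        supnorm \<Omega> (\<lambda>x. f u x - f v x) \<le> L * supnorm \<Omega> (\<lambda>x. u x - v x)) \<and>
     (\<forall>u\<in>cfun \<Omega>. \<forall>v\<in>cfun \<Omega>. (\<forall>x\<in>\<Omega>. u x \<le> v x) \<longrightarrow> (\<forall>x\<in>\<Omega>. f v x \<le> f u x))"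

text \<open>(A, tau) is a solution of system (1.1) on [0,r] with initial distribution (phi, tau0).
  Here A(l - tau(l))(x,y) = A(l - tau(l,x), y).\<close>
definition is_solution :: "'b::topological_space set \<Rightarrow>
   (('b \<Rightarrow> real) \<Rightarrow> ('b \<Rightarrow> real) \<Rightarrow> ('b \<times> 'b \<Rightarrow> real) \<Rightarrow> ('b \<Rightarrow> real)) \<Rightarrow>
   (('b \<Rightarrow> real) \<Rightarrow> ('b \<Rightarrow> real)) \<Rightarrow>
   (real \<Rightarrow> 'b \<Rightarrow> real) \<Rightarrow> ('b \<Rightarrow> real) \<Rightarrow> real \<Rightarrow>
   (real \<Rightarrow> 'b \<Rightarrow> real) \<Rightarrow> (real \<Rightarrow> 'b \<Rightarrow> real) \<Rightarrow> bool" where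
  "is_solution \<Omega> F f \<phi> \<tau>0 r A \<tau> \<longleftrightarrow>
     cont_sup \<Omega> {..r} A \<and>
     cont_sup \<Omega> {0..r} \<tau> \<and> (\<forall>t\<in>{0..r}. \<forall>x\<in>\<Omega>. 0 \<le> \<tau> t x) \<and>
     (\<forall>\<theta>\<le>0. \<forall>x\<in>\<Omega>. A \<theta> x = \<phi> \<theta> x) \<and>
     (\<forall>t\<in>{0..r}. \<forall>x\<in>\<Omega>.
        ((\<lambda>l. F (A l) (\<tau> l) (\<lambda>p. A (l - \<tau> l (fst p)) (snd p)) x)
           has_integral (A t x - \<phi> 0 x)) {0..t}) \<and>
     (\<forall>t\<in>{0..r}. \<forall>x\<in>\<Omega>.
        (\<lambda>s. f (A s) x) integrable_on {t - \<tau> t x..t} \<and>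
        (\<lambda>s. f (\<phi> s) x) integrable_on {- \<tau>0 x..0} \<and>
        integral {t - \<tau> t x..t} (\<lambda>s. f (A s) x) = integral {- \<tau>0 x..0} (\<lambda>s. f (\<phi> s) x))"

end

theory Submission
  imports Defs
begin

text \<open>
  On \<open>\<theta> \<le> -t\<close> the shifted history \<open>A\<^sub>t\<close> is a translate of the initial history, and its
  weighted map is \<open>exp(-\<alpha>t)\<close> times a piece of the weighted map of \<open>\<phi>\<close>; so both its size and its
  Lipschitz constant are controlled by \<open>M\<^sub>0\<close>. On \<open>[-t, 0]\<close> the weighted map is
  \<open>exp(\<alpha>\<theta>) A(t + \<theta>)\<close>, whose Lipschitz constant is at most \<open>\<alpha>M + K\<close>, where \<open>K\<close> bounds the
  integrand of the integral equation. A uniform \<open>K\<close> exists because \<open>F\<close> is bounded on bounded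
  sets and all its arguments stay bounded: \<open>|A| \<le> M\<close> on \<open>[0, r]\<close>, and since \<open>f > 0\<close> and the
  integral of \<open>f\<close> over the delay window is conserved, \<open>\<tau>(t, x) \<le> t + \<tau>\<^sub>0(x) \<le> t + M\<^sub>0\<close>; hence
  the delayed argument stays in \<open>[-M\<^sub>0, r]\<close>, where the history is bounded by
  \<open>max M (M\<^sub>0 exp(\<alpha>M\<^sub>0))\<close>.
\<close>

section \<open>Sup norms and continuous curves in \<open>C(\<Omega>)\<close>\<close>

lemma abs_le_supnorm:
  fixes S :: "'b::metric_space set"
  assumes "compact S" "continuous_on S u" "x \<in> S"
  shows "\<bar>u x\<bar> \<le> supnorm S u"
proof -
  have "bounded (u ` S)"
    using assms by (intro compact_imp_bounded compact_continuous_image)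
  then have "bdd_above ((\<lambda>y. \<bar>u y\<bar>) ` S)"
    by (auto simp: bounded_iff intro: bdd_aboveI2)
  then show ?thesis
    using assms(3) unfolding supnorm_def by (auto intro: cSUP_upper)
qed

lemma supnorm_le:
  assumes "\<And>x. x \<in> S \<Longrightarrow> \<bar>u x\<bar> \<le> B" "0 \<le> B"
  shows "supnorm S u \<le> B"
  using assms unfolding supnorm_def by (auto intro: cSUP_least)

lemma supnorm_nonneg:
  fixes S :: "'b::metric_space set"
  assumes "compact S" "continuous_on S u"
  shows "0 \<le> supnorm S u"
proof (cases "S = {}")
  case False
  then obtain x where "x \<in> S" by auto
  with abs_le_supnorm[OF assms this] show ?thesis by linarith
qed (simp add: supnorm_def)

lemma cont_sup_continuous_on:
  "cont_sup S T A \<Longrightarrow> t \<in> T \<Longrightarrow> continuous_on S (A t)"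
  by (simp add: cont_sup_def cfun_def)

lemma cont_sup_continuous_on_Times:
  fixes S :: "'b::metric_space set"
  assumes S: "compact S" and A: "cont_sup S T A"
  shows "continuous_on (T \<times> S) (\<lambda>(s, y). A s y)"
  unfolding continuous_on_iff
proof (intro ballI allI impI)
  fix p0 :: "real \<times> 'b" and e :: real
  assume "p0 \<in> T \<times> S" "0 < e"
  then obtain t0 y0 where p0: "p0 = (t0, y0)" "t0 \<in> T" "y0 \<in> S" and e2: "0 < e / 2" by auto
  obtain d1 where d1: "0 < d1" "\<forall>s\<in>T. \<bar>s - t0\<bar> < d1 \<longrightarrow> supnorm S (\<lambda>y. A s y - A t0 y) < e / 2"
    using A p0(2) e2 unfolding cont_sup_def by blast
  obtain d2 where d2: "0 < d2" "\<forall>y\<in>S. dist y y0 < d2 \<longrightarrow> dist (A t0 y) (A t0 y0) < e / 2"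
    using cont_sup_continuous_on[OF A p0(2)] p0(3) e2 unfolding continuous_on_iff by blast
  show "\<exists>d>0. \<forall>p\<in>T \<times> S. dist p p0 < d \<longrightarrow>
          dist ((\<lambda>(s, y). A s y) p) ((\<lambda>(s, y). A s y) p0) < e"
  proof (intro exI[of _ "min d1 d2"] conjI ballI impI)
    fix p assume "p \<in> T \<times> S" "dist p p0 < min d1 d2"
    then obtain s y where p: "p = (s, y)" "s \<in> T" "y \<in> S" "dist s t0 < d1" "dist y y0 < d2"
      using dist_fst_le[of p p0] dist_snd_le[of p p0] p0 by (cases p) auto
    have "\<bar>A s y - A t0 y\<bar> \<le> supnorm S (\<lambda>y. A s y - A t0 y)"
      using cont_sup_continuous_on[OF A] p p0(2) S
      by (intro abs_le_supnorm continuous_intros) auto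
    also have "\<dots> < e / 2"
      using d1 p by (simp add: dist_real_def)
    finally have "dist (A t0 y) (A s y) < e / 2"
      by (simp add: dist_real_def abs_minus_commute)
    moreover have "dist (A t0 y) (A t0 y0) < e / 2"
      using d2 p by simp
    ultimately show "dist ((\<lambda>(s, y). A s y) p) ((\<lambda>(s, y). A s y) p0) < e"
      using p p0 by (simp add: dist_triangle_half_r)
  qed (use d1 d2 in simp)
qed

lemma cont_sup_continuous_on_delayed:
  fixes S :: "'b::metric_space set"
  assumes "compact S" "cont_sup S T A" "continuous_on S g" "g ` S \<subseteq> T"
  shows "continuous_on (S \<times> S) (\<lambda>p. A (g (fst p)) (snd p))"
proof -
  have "continuous_on (S \<times> S) (\<lambda>p. g (fst p))"
    by (rule continuous_on_compose2[OF assms(3) continuous_on_fst]) auto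
  then have "continuous_on (S \<times> S) (\<lambda>p. (g (fst p), snd p))"
    by (intro continuous_on_Pair continuous_on_snd continuous_on_id)
  moreover have "(\<lambda>p. (g (fst p), snd p)) ` (S \<times> S) \<subseteq> T \<times> S"
    using assms(4) by auto
  ultimately have "continuous_on (S \<times> S) (\<lambda>p. (\<lambda>(s, y). A s y) (g (fst p), snd p))"
    by (rule continuous_on_compose2[OF cont_sup_continuous_on_Times[OF assms(1,2)]])
  then show ?thesis by simp
qed

lemma cont_sup_continuous_on_component:
  fixes S :: "'b::metric_space set"
  assumes "compact S" "cont_sup S T A" "y \<in> S"
  shows "continuous_on T (\<lambda>s. A s y)"
proof -
  have "(\<lambda>s. (s, y)) ` T \<subseteq> T \<times> S"
    using assms(3) by auto
  then have "continuous_on T (\<lambda>s. (\<lambda>(s, y). A s y) (s, y))"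
    by (intro continuous_on_compose2[OF cont_sup_continuous_on_Times[OF assms(1,2)]]
        continuous_intros)
  then show ?thesis by simp
qed

lemma cont_sup_shift:
  assumes A: "cont_sup S {..r} A" and t: "t \<le> r"
  shows "cont_sup S {..0} (\<lambda>\<theta>. A (t + \<theta>))"
  unfolding cont_sup_def
proof (intro conjI ballI allI impI)
  fix \<theta> :: real assume "\<theta> \<in> {..0}"
  then show "A (t + \<theta>) \<in> cfun S" using A t by (auto simp: cont_sup_def)
next
  fix \<theta> e :: real assume "\<theta> \<in> {..0}" "0 < e"
  moreover have "t + \<theta> \<in> {..r}" using \<open>\<theta> \<in> {..0}\<close> t by simp
  ultimately obtain d where d: "0 < d"
      "\<forall>s\<in>{..r}. \<bar>s - (t + \<theta>)\<bar> < d \<longrightarrow> supnorm S (\<lambda>x. A s x - A (t + \<theta>) x) < e"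
    using A unfolding cont_sup_def by blast
  show "\<exists>d>0. \<forall>s\<in>{..0}. \<bar>s - \<theta>\<bar> < d \<longrightarrow>
          supnorm S (\<lambda>x. A (t + s) x - A (t + \<theta>) x) < e"
  proof (intro exI[of _ d] conjI ballI impI)
    fix s assume "s \<in> {..0}" "\<bar>s - \<theta>\<bar> < d"
    then have "t + s \<in> {..r}" "\<bar>(t + s) - (t + \<theta>)\<bar> < d" using t by auto
    then show "supnorm S (\<lambda>x. A (t + s) x - A (t + \<theta>) x) < e" using d(2) by blast
  qed (rule d(1))
qed

lemma lipschitz_on_exp_nonpos: "1-lipschitz_on {..0::real} exp"
proof (rule lipschitz_on_leI)
  fix x y :: real assume "x \<in> {..0}" "y \<in> {..0}" "x \<le> y"
  then have "exp y - exp x = exp y * (1 - exp (x - y))"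
    by (simp add: algebra_simps exp_diff)
  also have "\<dots> \<le> 1 - exp (x - y)"
    using \<open>y \<in> {..0}\<close> \<open>x \<le> y\<close> by (intro mult_left_le_one_le) auto
  also have "\<dots> \<le> y - x"
    using exp_ge_add_one_self[of "x - y"] by linarith
  finally show "dist (exp x) (exp y) \<le> 1 * dist x y"
    using \<open>x \<le> y\<close> by (simp add: dist_real_def)
qed simp

lemma lipschitz_on_translate: "1-lipschitz_on U (\<lambda>\<theta>::real. t + \<theta>)"
  by (rule lipschitz_onI) (auto simp: dist_real_def)

lemma lipschitz_on_exp_scaled:
  assumes "0 \<le> \<alpha>"
  shows "\<alpha>-lipschitz_on {..0::real} (\<lambda>\<theta>. exp (\<alpha> * \<theta>))"
proof -
  have "(\<alpha> * 1)-lipschitz_on {..0} (\<lambda>\<theta>::real. \<alpha> * \<theta>)"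
    using assms lipschitz_on_id by (rule lipschitz_on_cmult_real_nonneg[rotated])
  moreover have "(\<lambda>\<theta>. \<alpha> * \<theta>) ` {..0} \<subseteq> {..0}"
    using assms by (auto simp: mult_nonneg_nonpos)
  ultimately have "(1 * (\<alpha> * 1))-lipschitz_on {..0} (\<lambda>\<theta>. exp (\<alpha> * \<theta>))"
    by (intro lipschitz_on_compose2[where g = exp] lipschitz_on_subset[OF lipschitz_on_exp_nonpos])
  then show ?thesis by simp
qed

lemma lipschitz_on_glue:
  fixes h :: "real \<Rightarrow> 'b::metric_space"
  assumes left: "L-lipschitz_on {..c} h" and right: "L-lipschitz_on {c..d} h"
  shows "L-lipschitz_on {..d} h"
proof (rule lipschitz_on_leI)
  fix x y assume x: "x \<in> {..d}" and y: "y \<in> {..d}" and "x \<le> y"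
  consider "y \<le> c" | "c \<le> x" | "x \<le> c" "c \<le> y" by linarith
  then show "dist (h x) (h y) \<le> L * dist x y"
  proof cases
    case 3
    have "dist (h x) (h y) \<le> dist (h x) (h c) + dist (h c) (h y)"
      by (rule dist_triangle)
    also have "\<dots> \<le> L * dist x c + L * dist c y"
      using 3 y by (intro add_mono lipschitz_onD[OF left] lipschitz_onD[OF right]) auto
    also have "\<dots> = L * dist x y"
      using 3 by (simp add: dist_real_def algebra_simps)
    finally show ?thesis .
  qed (use x y \<open>x \<le> y\<close> in \<open>auto intro: lipschitz_onD[OF left] lipschitz_onD[OF right]\<close>)
qed (rule lipschitz_on_nonneg[OF left])

lemma lipschitz_on_mult_bounded:
  fixes f g :: "'a::metric_space \<Rightarrow> real"
  assumes f: "Lf-lipschitz_on U f" and g: "Lg-lipschitz_on U g"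
    and fB: "\<And>x. x \<in> U \<Longrightarrow> \<bar>f x\<bar> \<le> Bf" and gB: "\<And>x. x \<in> U \<Longrightarrow> \<bar>g x\<bar> \<le> Bg"
    and "0 \<le> Bf" "0 \<le> Bg"
  shows "(Lf * Bg + Bf * Lg)-lipschitz_on U (\<lambda>x. f x * g x)"
proof (rule lipschitz_onI)
  fix x y assume x: "x \<in> U" and y: "y \<in> U"
  have "\<bar>f x * g x - f y * g y\<bar> = \<bar>(f x - f y) * g x + f y * (g x - g y)\<bar>"
    by (simp add: algebra_simps)
  also have "\<dots> \<le> \<bar>f x - f y\<bar> * \<bar>g x\<bar> + \<bar>f y\<bar> * \<bar>g x - g y\<bar>"
    unfolding abs_mult[symmetric] by (rule abs_triangle_ineq)
  also have "\<dots> \<le> (Lf * dist x y) * Bg + Bf * (Lg * dist x y)"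
    using lipschitz_onD[OF f x y] lipschitz_onD[OF g x y] fB[OF x] fB[OF y] gB[OF x]
    by (intro add_mono mult_mono) (auto simp: dist_real_def)
  finally show "dist (f x * g x) (f y * g y) \<le> (Lf * Bg + Bf * Lg) * dist x y"
    by (simp add: dist_real_def algebra_simps)
qed (use lipschitz_on_nonneg[OF f] lipschitz_on_nonneg[OF g] assms in simp)

section \<open>The space \<open>Lip\<^sub>\<alpha>\<close>\<close>

lemma in_Lip_continuous_on_wt:
  assumes "in_Lip S \<alpha> \<phi>" "\<theta> \<le> 0"
  shows "continuous_on S (wt \<alpha> \<phi> \<theta>)"
proof -
  have "continuous_on S (\<phi> \<theta>)"
    using assms unfolding in_Lip_def by (auto intro: cont_sup_continuous_on)
  then show ?thesis unfolding wt_def by (intro continuous_intros)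
qed

lemma Lip_norm_ge:
  fixes S :: "'b::metric_space set"
  assumes S: "compact S" and \<phi>: "in_Lip S \<alpha> \<phi>"
  shows "\<theta> \<le> 0 \<Longrightarrow> supnorm S (wt \<alpha> \<phi> \<theta>) \<le> Lip_norm S \<alpha> \<phi>"
    and "\<theta> \<le> 0 \<Longrightarrow> \<theta>' \<le> 0 \<Longrightarrow>
      supnorm S (\<lambda>x. wt \<alpha> \<phi> \<theta> x - wt \<alpha> \<phi> \<theta>' x) \<le> Lip_norm S \<alpha> \<phi> * \<bar>\<theta> - \<theta>'\<bar>"
proof -
  define P where "P = {p::real \<times> real. fst p \<le> 0 \<and> snd p \<le> 0 \<and> fst p \<noteq> snd p}"
  define D where "D p = supnorm S (\<lambda>x. wt \<alpha> \<phi> (fst p) x - wt \<alpha> \<phi> (snd p) x)" for p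
  define N1 where "N1 = (SUP \<theta>\<in>{..0}. supnorm S (wt \<alpha> \<phi> \<theta>))"
  define N2 where "N2 = (SUP p\<in>P. D p / \<bar>fst p - snd p\<bar>)"
  have N: "Lip_norm S \<alpha> \<phi> = N1 + N2"
    unfolding Lip_norm_def N1_def N2_def P_def D_def ..
  note wt_cont = in_Lip_continuous_on_wt[OF \<phi>]
  obtain B L where
    B: "\<And>\<theta>. \<theta> \<le> 0 \<Longrightarrow> supnorm S (wt \<alpha> \<phi> \<theta>) \<le> B" and
    L: "\<And>p. p \<in> P \<Longrightarrow> D p \<le> L * \<bar>fst p - snd p\<bar>"
    using \<phi> unfolding in_Lip_def P_def D_def by blast
  have N1_ge: "supnorm S (wt \<alpha> \<phi> \<theta>) \<le> N1" if "\<theta> \<le> 0" for \<theta>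
    unfolding N1_def using B that by (intro cSUP_upper bdd_aboveI2[of _ _ B]) auto
  have N2_ge: "D p / \<bar>fst p - snd p\<bar> \<le> N2" if "p \<in> P" for p
    unfolding N2_def
  proof (intro cSUP_upper bdd_aboveI2[of _ _ L] that)
    fix q assume "q \<in> P"
    then show "D q / \<bar>fst q - snd q\<bar> \<le> L"
      using L[of q] unfolding P_def by (simp add: divide_le_eq)
  qed
  have "(0, -1) \<in> P" unfolding P_def by simp
  then have "0 \<le> D (0, -1)"
    unfolding D_def P_def by (intro supnorm_nonneg S continuous_intros wt_cont) auto
  then have N_parts: "0 \<le> N1" "0 \<le> N2"
    using N1_ge[of 0] N2_ge[OF \<open>(0, -1) \<in> P\<close>] supnorm_nonneg[OF S wt_cont[of 0]] by auto
  show "supnorm S (wt \<alpha> \<phi> \<theta>) \<le> Lip_norm S \<alpha> \<phi>" if "\<theta> \<le> 0"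
    using N1_ge[OF that] N N_parts by simp
  show "supnorm S (\<lambda>x. wt \<alpha> \<phi> \<theta> x - wt \<alpha> \<phi> \<theta>' x) \<le> Lip_norm S \<alpha> \<phi> * \<bar>\<theta> - \<theta>'\<bar>"
    if "\<theta> \<le> 0" "\<theta>' \<le> 0"
  proof (cases "\<theta> = \<theta>'")
    case False
    then have p: "(\<theta>, \<theta>') \<in> P" "0 < \<bar>\<theta> - \<theta>'\<bar>"
      using that unfolding P_def by auto
    have "D (\<theta>, \<theta>') = D (\<theta>, \<theta>') / \<bar>\<theta> - \<theta>'\<bar> * \<bar>\<theta> - \<theta>'\<bar>"
      using p(2) by simp
    also have "\<dots> \<le> Lip_norm S \<alpha> \<phi> * \<bar>\<theta> - \<theta>'\<bar>"
      using N2_ge[OF p(1)] N N_parts by (intro mult_right_mono) auto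
    finally show ?thesis unfolding D_def by simp
  qed (use N N_parts in \<open>simp add: supnorm_le\<close>)
qed

lemma Lip_norm_bounds:
  fixes S :: "'b::metric_space set"
  assumes S: "compact S" and \<phi>: "in_Lip S \<alpha> \<phi>"
  shows "0 \<le> Lip_norm S \<alpha> \<phi>"
    and "\<theta> \<le> 0 \<Longrightarrow> y \<in> S \<Longrightarrow> \<bar>wt \<alpha> \<phi> \<theta> y\<bar> \<le> Lip_norm S \<alpha> \<phi>"
    and "y \<in> S \<Longrightarrow> (Lip_norm S \<alpha> \<phi>)-lipschitz_on {..0} (\<lambda>\<theta>. wt \<alpha> \<phi> \<theta> y)"
proof -
  note wt_cont = in_Lip_continuous_on_wt[OF \<phi>]
  show "0 \<le> Lip_norm S \<alpha> \<phi>"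
    using supnorm_nonneg[OF S wt_cont[of 0]] Lip_norm_ge(1)[OF S \<phi>, of 0] by simp
  then show "\<bar>wt \<alpha> \<phi> \<theta> y\<bar> \<le> Lip_norm S \<alpha> \<phi>" if "\<theta> \<le> 0" "y \<in> S"
    using abs_le_supnorm[OF S wt_cont[OF that(1)] that(2)] Lip_norm_ge(1)[OF S \<phi> that(1)] by simp
  show "(Lip_norm S \<alpha> \<phi>)-lipschitz_on {..0} (\<lambda>\<theta>. wt \<alpha> \<phi> \<theta> y)" if y: "y \<in> S"
  proof (rule lipschitz_onI)
    fix \<theta> \<theta>' :: real assume "\<theta> \<in> {..0}" "\<theta>' \<in> {..0}"
    then have "\<bar>wt \<alpha> \<phi> \<theta> y - wt \<alpha> \<phi> \<theta>' y\<bar> \<le> supnorm S (\<lambda>x. wt \<alpha> \<phi> \<theta> x - wt \<alpha> \<phi> \<theta>' x)"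
      using wt_cont y
      by (intro abs_le_supnorm[OF S _ y, of "\<lambda>x. wt \<alpha> \<phi> \<theta> x - wt \<alpha> \<phi> \<theta>' x"]
          continuous_intros) auto
    also have "\<dots> \<le> Lip_norm S \<alpha> \<phi> * \<bar>\<theta> - \<theta>'\<bar>"
      using \<open>\<theta> \<in> {..0}\<close> \<open>\<theta>' \<in> {..0}\<close> by (intro Lip_norm_ge(2)[OF S \<phi>]) auto
    finally show "dist (wt \<alpha> \<phi> \<theta> y) (wt \<alpha> \<phi> \<theta>' y) \<le> Lip_norm S \<alpha> \<phi> * dist \<theta> \<theta>'"
      by (simp add: dist_real_def)
  qed fact
qed

lemma in_Lip_Lip_norm_le:
  assumes \<phi>: "cont_sup S {..0} \<phi>" and "0 \<le> B" "0 \<le> L"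
    and bound: "\<And>\<theta> y. \<theta> \<le> 0 \<Longrightarrow> y \<in> S \<Longrightarrow> \<bar>wt \<alpha> \<phi> \<theta> y\<bar> \<le> B"
    and lip: "\<And>y. y \<in> S \<Longrightarrow> L-lipschitz_on {..0} (\<lambda>\<theta>. wt \<alpha> \<phi> \<theta> y)"
  shows "in_Lip S \<alpha> \<phi> \<and> Lip_norm S \<alpha> \<phi> \<le> B + L"
proof -
  have sup_le: "supnorm S (wt \<alpha> \<phi> \<theta>) \<le> B" if "\<theta> \<le> 0" for \<theta>
    using bound that \<open>0 \<le> B\<close> by (intro supnorm_le) auto
  have diff_le: "supnorm S (\<lambda>x. wt \<alpha> \<phi> \<theta> x - wt \<alpha> \<phi> \<theta>' x) \<le> L * \<bar>\<theta> - \<theta>'\<bar>"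
    if "\<theta> \<le> 0" "\<theta>' \<le> 0" for \<theta> \<theta>'
    using lipschitz_onD[OF lip, of _ \<theta> \<theta>'] that \<open>0 \<le> L\<close>
    by (intro supnorm_le) (auto simp: dist_real_def)
  have "(SUP \<theta>\<in>{..0}. supnorm S (wt \<alpha> \<phi> \<theta>)) \<le> B"
    using sup_le by (intro cSUP_least) auto
  moreover have "(SUP p\<in>{p::real \<times> real. fst p \<le> 0 \<and> snd p \<le> 0 \<and> fst p \<noteq> snd p}.
      supnorm S (\<lambda>x. wt \<alpha> \<phi> (fst p) x - wt \<alpha> \<phi> (snd p) x) / \<bar>fst p - snd p\<bar>) \<le> L"
  proof (rule cSUP_least)
    have "(0, -1) \<in> {p::real \<times> real. fst p \<le> 0 \<and> snd p \<le> 0 \<and> fst p \<noteq> snd p}"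
      by simp
    then show "{p::real \<times> real. fst p \<le> 0 \<and> snd p \<le> 0 \<and> fst p \<noteq> snd p} \<noteq> {}"
      by blast
  qed (use diff_le in \<open>auto simp: divide_le_eq\<close>)
  ultimately show ?thesis
    unfolding in_Lip_def Lip_norm_def using \<phi> sup_le diff_le by auto
qed

section \<open>Bounds along a solution\<close>

lemma f_ok_cong:
  fixes \<Omega> :: "'b::metric_space set"
  assumes \<Omega>: "compact \<Omega>" and f: "f_ok \<Omega> f Mf"
    and u: "continuous_on \<Omega> u" and v: "continuous_on \<Omega> v"
    and eq: "\<And>y. y \<in> \<Omega> \<Longrightarrow> u y = v y" and x: "x \<in> \<Omega>"
  shows "f u x = f v x"
proof -
  obtain L where L: "supnorm \<Omega> (\<lambda>x. f u x - f v x) \<le> L * supnorm \<Omega> (\<lambda>x. u x - v x)"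
    using f u v unfolding f_ok_def cfun_def by blast
  have "supnorm \<Omega> (\<lambda>x. u x - v x) = 0"
    using eq by (intro antisym supnorm_le supnorm_nonneg \<Omega> continuous_intros u v) auto
  moreover have "\<bar>f u x - f v x\<bar> \<le> supnorm \<Omega> (\<lambda>x. f u x - f v x)"
    using f u v x unfolding f_ok_def cfun_def by (intro abs_le_supnorm \<Omega> continuous_intros) auto
  ultimately show ?thesis using L by simp
qed

lemma integral_combine3:
  fixes g :: "real \<Rightarrow> 'a::banach"
  assumes "a \<le> b" "b \<le> c" "c \<le> d" and g: "g integrable_on {a..d}"
  shows "integral {a..d} g = integral {a..b} g + integral {b..c} g + integral {c..d} g"
proof -
  have "g integrable_on {a..c}"
    using assms by (intro integrable_subinterval_real[OF g]) auto
  then have "integral {a..b} g + integral {b..c} g = integral {a..c} g"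
    using assms by (intro Henstock_Kurzweil_Integration.integral_combine) auto
  moreover have "integral {a..c} g + integral {c..d} g = integral {a..d} g"
    using assms by (intro Henstock_Kurzweil_Integration.integral_combine) auto
  ultimately show ?thesis by metis
qed

lemma solution_f_past:
  fixes \<Omega> :: "'b::metric_space set"
  assumes \<Omega>: "compact \<Omega>" and f: "f_ok \<Omega> f Mf" and sol: "is_solution \<Omega> F f \<phi> \<tau>0 r A \<tau>"
    and "s \<le> 0" "s \<le> r" and x: "x \<in> \<Omega>"
  shows "f (A s) x = f (\<phi> s) x"
proof (rule f_ok_cong[OF \<Omega> f _ _ _ x])
  have past: "A s y = \<phi> s y" if "y \<in> \<Omega>" for y
    using sol that \<open>s \<le> 0\<close> unfolding is_solution_def by auto
  show "continuous_on \<Omega> (A s)"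
    using sol \<open>s \<le> r\<close> unfolding is_solution_def by (auto intro: cont_sup_continuous_on)
  then show "continuous_on \<Omega> (\<phi> s)"
    using past continuous_on_cong by blast
  show "A s y = \<phi> s y" if "y \<in> \<Omega>" for y
    using past[OF that] .
qed

lemma solution_delay_bound_pos:
  fixes \<Omega> :: "'b::metric_space set"
  assumes \<Omega>: "compact \<Omega>" and f: "f_ok \<Omega> f Mf" and \<tau>0: "\<forall>x\<in>\<Omega>. 0 \<le> \<tau>0 x"
    and sol: "is_solution \<Omega> F f \<phi> \<tau>0 r A \<tau>"
    and A_le: "\<And>s y. s \<in> {0..r} \<Longrightarrow> y \<in> \<Omega> \<Longrightarrow> A s y \<le> M"
    and t: "0 < t" "t \<le> r" and x: "x \<in> \<Omega>"
  shows "\<tau> t x \<le> t + \<tau>0 x"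
proof (rule ccontr)
  define a where "a = t - \<tau> t x"
  define b where "b = - \<tau>0 x"
  define g where "g s = f (A s) x" for s
  define c where "c = f (\<lambda>_. M) x"
  assume "\<not> \<tau> t x \<le> t + \<tau>0 x"
  then have ab: "a < b" "b \<le> 0" using \<tau>0 x unfolding a_def b_def by auto
  have A_cont: "continuous_on \<Omega> (A s)" if "s \<le> r" for s
    using sol that unfolding is_solution_def by (auto intro: cont_sup_continuous_on)
  have g: "g integrable_on {a..t}" "integral {a..t} g = integral {b..0} (\<lambda>s. f (\<phi> s) x)"
    using sol t x unfolding is_solution_def a_def b_def g_def by auto
  have "integral {a..t} g = integral {a..b} g + integral {b..0} g + integral {0..t} g"
    using ab t by (intro integral_combine3 g(1)) auto
  moreover have "integral {b..0} g = integral {b..0} (\<lambda>s. f (\<phi> s) x)"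
    using t unfolding g_def by (intro integral_cong solution_f_past[OF \<Omega> f sol _ _ x]) auto
  moreover have "0 \<le> integral {a..b} g"
  proof (rule integral_nonneg)
    show "g integrable_on {a..b}"
      using ab t by (intro integrable_subinterval_real[OF g(1)]) auto
    show "0 \<le> g s" if "s \<in> {a..b}" for s
      using f A_cont[of s] x that ab t unfolding f_ok_def cfun_def g_def by (auto intro: less_imp_le)
  qed
  moreover have "t * c \<le> integral {0..t} g"
  proof -
    have "c \<le> g s" if "s \<in> {0..t}" for s
      using f A_cont[of s] A_le[of s] x that t unfolding f_ok_def cfun_def g_def c_def by auto
    then have "integral {0..t} (\<lambda>_. c) \<le> integral {0..t} g"
      using ab t by (intro integral_le integrable_subinterval_real[OF g(1)]) auto
    then show ?thesis using t by simp
  qed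
  moreover have "0 < t * c"
    using f x t unfolding f_ok_def cfun_def c_def by auto
  ultimately show False using g(2) by linarith
qed

lemma solution_delay_bound:
  fixes \<Omega> :: "'b::metric_space set"
  assumes \<Omega>: "compact \<Omega>" and f: "f_ok \<Omega> f Mf" and \<tau>0: "\<forall>x\<in>\<Omega>. 0 \<le> \<tau>0 x"
    and sol: "is_solution \<Omega> F f \<phi> \<tau>0 r A \<tau>"
    and A_le: "\<And>s y. s \<in> {0..r} \<Longrightarrow> y \<in> \<Omega> \<Longrightarrow> A s y \<le> M"
    and r: "0 < r" and t: "t \<in> {0..r}" and x: "x \<in> \<Omega>"
  shows "\<tau> t x \<le> t + \<tau>0 x"
proof -
  let ?good = "{s \<in> {0..r}. \<tau> s x \<le> s + \<tau>0 x}"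
  have "continuous_on {0..r} (\<lambda>s. \<tau> s x)"
    using sol \<Omega> x unfolding is_solution_def by (blast intro: cont_sup_continuous_on_component)
  then have "closed ?good"
    by (intro continuous_on_closed_Collect_le continuous_intros) auto
  moreover have "{0<..r} \<subseteq> ?good"
    using solution_delay_bound_pos[OF \<Omega> f \<tau>0 sol A_le _ _ x] by auto
  ultimately have "closure {0<..r} \<subseteq> ?good"
    by (rule closure_minimal[rotated])
  then show ?thesis using r t by auto
qed

definition F_ball_bound :: "'b::topological_space set \<Rightarrow>
   (('b \<Rightarrow> real) \<Rightarrow> ('b \<Rightarrow> real) \<Rightarrow> ('b \<times> 'b \<Rightarrow> real) \<Rightarrow> ('b \<Rightarrow> real)) \<Rightarrow> real \<Rightarrow> real \<Rightarrow> bool"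
  where "F_ball_bound \<Omega> F B K \<longleftrightarrow>
    (\<forall>u\<in>cfun \<Omega>. \<forall>v\<in>cfun \<Omega>. \<forall>w\<in>cfun (\<Omega> \<times> \<Omega>).
      supnorm \<Omega> u \<le> B \<longrightarrow> supnorm \<Omega> v \<le> B \<longrightarrow> supnorm (\<Omega> \<times> \<Omega>) w \<le> B \<longrightarrow>
      (\<forall>x\<in>\<Omega>. \<bar>F u v w x\<bar> \<le> K))"

lemma F_ok_bounded:
  fixes \<Omega> :: "'b::metric_space set"
  assumes \<Omega>: "compact \<Omega>" and F: "F_ok \<Omega> F" and "0 \<le> B"
  shows "\<exists>K \<ge> 0. F_ball_bound \<Omega> F B K"
proof -
  define z :: "'b \<Rightarrow> real" where "z = (\<lambda>_. 0)"
  define z2 :: "'b \<times> 'b \<Rightarrow> real" where "z2 = (\<lambda>_. 0)"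
  have z: "z \<in> cfun \<Omega>" "z2 \<in> cfun (\<Omega> \<times> \<Omega>)" "supnorm \<Omega> z \<le> B" "supnorm (\<Omega> \<times> \<Omega>) z2 \<le> B"
    unfolding z_def z2_def cfun_def using \<open>0 \<le> B\<close> by (simp_all add: supnorm_le)
  obtain L where L: "\<forall>u\<in>cfun \<Omega>. \<forall>v\<in>cfun \<Omega>. \<forall>w\<in>cfun (\<Omega> \<times> \<Omega>).
      \<forall>u'\<in>cfun \<Omega>. \<forall>v'\<in>cfun \<Omega>. \<forall>w'\<in>cfun (\<Omega> \<times> \<Omega>).
      supnorm \<Omega> u \<le> B \<longrightarrow> supnorm \<Omega> v \<le> B \<longrightarrow> supnorm (\<Omega> \<times> \<Omega>) w \<le> B \<longrightarrow>
      supnorm \<Omega> u' \<le> B \<longrightarrow> supnorm \<Omega> v' \<le> B \<longrightarrow> supnorm (\<Omega> \<times> \<Omega>) w' \<le> B \<longrightarrow>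
      supnorm \<Omega> (\<lambda>x. F u v w x - F u' v' w' x)
        \<le> L * (supnorm \<Omega> (\<lambda>x. u x - u' x) + supnorm \<Omega> (\<lambda>x. v x - v' x)
               + supnorm (\<Omega> \<times> \<Omega>) (\<lambda>p. w p - w' p))"
    using F unfolding F_ok_def by blast
  have F_cont: "\<forall>u\<in>cfun \<Omega>. \<forall>v\<in>cfun \<Omega>. \<forall>w\<in>cfun (\<Omega> \<times> \<Omega>). F u v w \<in> cfun \<Omega>"
    using F unfolding F_ok_def by blast
  define F0 where "F0 = F z z z2"
  have F0: "continuous_on \<Omega> F0" using F_cont z unfolding F0_def cfun_def by blast
  show ?thesis
  proof (intro exI[of _ "supnorm \<Omega> F0 + \<bar>L\<bar> * (3 * B)"] conjI)
    show "0 \<le> supnorm \<Omega> F0 + \<bar>L\<bar> * (3 * B)"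
      using supnorm_nonneg[OF \<Omega> F0] \<open>0 \<le> B\<close> by simp
    show "F_ball_bound \<Omega> F B (supnorm \<Omega> F0 + \<bar>L\<bar> * (3 * B))"
      unfolding F_ball_bound_def
    proof (intro ballI impI)
      fix u v w x
      assume uvw: "u \<in> cfun \<Omega>" "v \<in> cfun \<Omega>" "w \<in> cfun (\<Omega> \<times> \<Omega>)"
        and B: "supnorm \<Omega> u \<le> B" "supnorm \<Omega> v \<le> B" "supnorm (\<Omega> \<times> \<Omega>) w \<le> B"
        and x: "x \<in> \<Omega>"
      have "0 \<le> supnorm \<Omega> u + supnorm \<Omega> v + supnorm (\<Omega> \<times> \<Omega>) w"
        using uvw supnorm_nonneg[OF \<Omega>] supnorm_nonneg[OF compact_Times[OF \<Omega> \<Omega>]]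
        unfolding cfun_def by simp
      then have "L * (supnorm \<Omega> u + supnorm \<Omega> v + supnorm (\<Omega> \<times> \<Omega>) w)
          \<le> \<bar>L\<bar> * (supnorm \<Omega> u + supnorm \<Omega> v + supnorm (\<Omega> \<times> \<Omega>) w)"
        by (intro mult_right_mono) auto
      also have "\<dots> \<le> \<bar>L\<bar> * (3 * B)"
        using B by (intro mult_left_mono) auto
      finally have "L * (supnorm \<Omega> u + supnorm \<Omega> v + supnorm (\<Omega> \<times> \<Omega>) w) \<le> \<bar>L\<bar> * (3 * B)" .
      moreover have "supnorm \<Omega> (\<lambda>x. F u v w x - F0 x)
          \<le> L * (supnorm \<Omega> u + supnorm \<Omega> v + supnorm (\<Omega> \<times> \<Omega>) w)"
        using L[rule_format, OF uvw z(1,1,2) B z(3,3,4)] unfolding F0_def z_def z2_def by simp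
      moreover have "\<bar>F u v w x - F0 x\<bar> \<le> supnorm \<Omega> (\<lambda>x. F u v w x - F0 x)"
        using F_cont uvw F0 x unfolding cfun_def by (intro abs_le_supnorm \<Omega> continuous_intros) auto
      moreover have "\<bar>F0 x\<bar> \<le> supnorm \<Omega> F0"
        using F0 x by (rule abs_le_supnorm[OF \<Omega>])
      ultimately show "\<bar>F u v w x\<bar> \<le> supnorm \<Omega> F0 + \<bar>L\<bar> * (3 * B)"
        by linarith
    qed
  qed
qed

lemma history_bound:
  assumes "0 \<le> \<alpha>"
    and past: "\<And>\<theta>. \<theta> \<le> 0 \<Longrightarrow> \<bar>wt \<alpha> A \<theta> y\<bar> \<le> M0"
    and present: "\<And>s. s \<in> {0..r} \<Longrightarrow> \<bar>A s y\<bar> \<le> M"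
    and s: "s \<in> {-D..r}"
  shows "\<bar>A s y\<bar> \<le> max M (M0 * exp (\<alpha> * D))"
proof (cases "0 \<le> s")
  case True
  then show ?thesis using present s by fastforce
next
  case False
  then have "\<bar>A s y\<bar> = exp (\<alpha> * \<bar>s\<bar>) * \<bar>wt \<alpha> A s y\<bar>"
    by (simp add: wt_def abs_mult exp_minus)
  also have "\<dots> \<le> exp (\<alpha> * D) * M0"
    using past[of s] False s \<open>0 \<le> \<alpha>\<close> mult_left_mono[of "- s" D \<alpha>]
    by (intro mult_mono) auto
  finally show ?thesis by (simp add: mult.commute)
qed

lemma solution_integrand_bounded:
  fixes \<Omega> :: "'b::metric_space set"
  assumes \<Omega>: "compact \<Omega>" and sol: "is_solution \<Omega> F f \<phi> \<tau>0 r A \<tau>"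
    and F: "F_ball_bound \<Omega> F B K"
    and A_bound: "\<And>s y. s \<in> {-D..r} \<Longrightarrow> y \<in> \<Omega> \<Longrightarrow> \<bar>A s y\<bar> \<le> B"
    and delay: "\<And>l y. l \<in> {0..r} \<Longrightarrow> y \<in> \<Omega> \<Longrightarrow> \<tau> l y \<le> l + D"
    and "0 \<le> B" "r + D \<le> B"
    and l: "l \<in> {0..r}" and x: "x \<in> \<Omega>"
  shows "\<bar>F (A l) (\<tau> l) (\<lambda>p. A (l - \<tau> l (fst p)) (snd p)) x\<bar> \<le> K"
proof (rule F[unfolded F_ball_bound_def, rule_format])
  have A: "cont_sup \<Omega> {..r} A" and \<tau>: "cont_sup \<Omega> {0..r} \<tau>"
    and \<tau>_nonneg: "\<And>y. y \<in> \<Omega> \<Longrightarrow> 0 \<le> \<tau> l y"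
    using sol l unfolding is_solution_def by auto
  have delayed: "l - \<tau> l y \<in> {-D..r}" if "y \<in> \<Omega>" for y
    using delay[OF l that] \<tau>_nonneg[OF that] l by auto
  show "A l \<in> cfun \<Omega>" "\<tau> l \<in> cfun \<Omega>"
    using A \<tau> l unfolding cont_sup_def by auto
  have "continuous_on \<Omega> (\<lambda>y. l - \<tau> l y)"
    using cont_sup_continuous_on[OF \<tau> l] by (intro continuous_intros)
  moreover have "(\<lambda>y. l - \<tau> l y) ` \<Omega> \<subseteq> {..r}"
    using delayed by auto
  ultimately show "(\<lambda>p. A (l - \<tau> l (fst p)) (snd p)) \<in> cfun (\<Omega> \<times> \<Omega>)"
    unfolding cfun_def mem_Collect_eq by (rule cont_sup_continuous_on_delayed[OF \<Omega> A])
  have "-D \<le> l" using delayed[OF x] \<tau>_nonneg[OF x] by auto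
  then show "supnorm \<Omega> (A l) \<le> B"
    using A_bound l \<open>0 \<le> B\<close> by (intro supnorm_le) auto
  show "supnorm \<Omega> (\<tau> l) \<le> B"
    using delay l \<tau>_nonneg \<open>r + D \<le> B\<close> \<open>0 \<le> B\<close> by (intro supnorm_le) fastforce+
  show "supnorm (\<Omega> \<times> \<Omega>) (\<lambda>p. A (l - \<tau> l (fst p)) (snd p)) \<le> B"
    using A_bound delayed \<open>0 \<le> B\<close> by (intro supnorm_le) auto
qed (rule x)

lemma solution_lipschitz:
  assumes sol: "is_solution \<Omega> F f \<phi> \<tau>0 r A \<tau>"
    and bound: "\<And>l. l \<in> {0..r} \<Longrightarrow> \<bar>F (A l) (\<tau> l) (\<lambda>p. A (l - \<tau> l (fst p)) (snd p)) x\<bar> \<le> K"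
    and "0 \<le> K" and x: "x \<in> \<Omega>"
  shows "K-lipschitz_on {0..r} (\<lambda>t. A t x)"
proof (rule lipschitz_on_leI)
  define G where "G l = F (A l) (\<tau> l) (\<lambda>p. A (l - \<tau> l (fst p)) (snd p)) x" for l
  fix a b assume ab: "a \<in> {0..r}" "b \<in> {0..r}" "a \<le> b"
  have G: "(G has_integral (A s x - \<phi> 0 x)) {0..s}" if "s \<in> {0..r}" for s
    using sol that x unfolding is_solution_def G_def by blast
  have G_b: "G integrable_on {0..b}" using G[OF ab(2)] by blast
  then have "integral {0..a} G + integral {a..b} G = integral {0..b} G"
    using ab by (intro Henstock_Kurzweil_Integration.integral_combine) auto
  then have "integral {a..b} G = A b x - A a x"
    using integral_unique[OF G[OF ab(1)]] integral_unique[OF G[OF ab(2)]] by linarith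
  moreover have "G integrable_on {a..b}"
    using ab by (intro integrable_subinterval_real[OF G_b]) auto
  ultimately have "(G has_integral (A b x - A a x)) {a..b}"
    by (metis has_integral_integral)
  moreover have "norm (G l) \<le> K" if "l \<in> {a..b}" for l
    using bound that ab unfolding G_def by auto
  ultimately have "norm (A b x - A a x) \<le> K * measure lborel {a..b}"
    using has_integral_bound[OF \<open>0 \<le> K\<close>, of G _ a b] unfolding cbox_interval by blast
  then show "dist (A a x) (A b x) \<le> K * dist a b"
    using ab by (simp add: dist_real_def abs_minus_commute)
qed fact

section \<open>Shifted histories\<close>

lemma wt_nonpos: "\<theta> \<le> 0 \<Longrightarrow> wt \<alpha> \<phi> \<theta> y = exp (\<alpha> * \<theta>) * \<phi> \<theta> y"
  by (simp add: wt_def)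

lemma wt_shift_past:
  assumes "0 \<le> t" "t + \<theta> \<le> 0"
  shows "wt \<alpha> (\<lambda>\<theta>. A (t + \<theta>)) \<theta> y = exp (- \<alpha> * t) * wt \<alpha> A (t + \<theta>) y"
  using assms by (simp add: wt_nonpos mult_exp_exp algebra_simps)

lemma history_weighted_bound:
  assumes "0 \<le> \<alpha>" and t: "t \<in> {0..r}" and "\<theta> \<le> 0" and "M0 \<le> M"
    and past: "\<And>\<theta>. \<theta> \<le> 0 \<Longrightarrow> \<bar>wt \<alpha> A \<theta> y\<bar> \<le> M0"
    and present: "\<And>s. s \<in> {0..r} \<Longrightarrow> \<bar>A s y\<bar> \<le> M"
  shows "\<bar>wt \<alpha> (\<lambda>\<theta>. A (t + \<theta>)) \<theta> y\<bar> \<le> M"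
proof (cases "0 \<le> t + \<theta>")
  case True
  have "\<bar>exp (\<alpha> * \<theta>) * A (t + \<theta>) y\<bar> \<le> 1 * M"
    unfolding abs_mult using assms True present[of "t + \<theta>"]
    by (intro mult_mono) (auto simp: mult_nonneg_nonpos)
  then show ?thesis using wt_nonpos[OF \<open>\<theta> \<le> 0\<close>, of \<alpha> "\<lambda>\<theta>. A (t + \<theta>)" y] by simp
next
  case False
  have "\<bar>exp (- \<alpha> * t) * wt \<alpha> A (t + \<theta>) y\<bar> \<le> 1 * M0"
    unfolding abs_mult using assms False past[of "t + \<theta>"] by (intro mult_mono) auto
  then show ?thesis using wt_shift_past[of t \<theta> \<alpha> A y] t False \<open>M0 \<le> M\<close> by simp
qed

lemma history_weighted_lipschitz_past:
  assumes "0 \<le> \<alpha>" "0 \<le> t" and past: "M0-lipschitz_on {..0} (\<lambda>\<theta>. wt \<alpha> A \<theta> y)"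
  shows "M0-lipschitz_on {..-t} (\<lambda>\<theta>. wt \<alpha> (\<lambda>\<theta>. A (t + \<theta>)) \<theta> y)"
proof -
  have "(\<lambda>\<theta>. t + \<theta>) ` {..-t} \<subseteq> {..0}" by auto
  then have "(M0 * 1)-lipschitz_on {..-t} (\<lambda>\<theta>. wt \<alpha> A (t + \<theta>) y)"
    by (rule lipschitz_on_compose2[OF lipschitz_on_translate lipschitz_on_subset[OF past]])
  moreover have "\<bar>exp (- \<alpha> * t)\<bar> \<le> 1" using assms by simp
  ultimately have "(1 * (M0 * 1))-lipschitz_on {..-t} (\<lambda>\<theta>. exp (- \<alpha> * t) * wt \<alpha> A (t + \<theta>) y)"
    by (rule lipschitz_on_cmult_real_upper)
  moreover have "wt \<alpha> (\<lambda>\<theta>. A (t + \<theta>)) \<theta> y = exp (- \<alpha> * t) * wt \<alpha> A (t + \<theta>) y"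
    if "\<theta> \<in> {..-t}" for \<theta>
    using that assms by (intro wt_shift_past) auto
  ultimately have "(1 * (M0 * 1))-lipschitz_on {..-t} (\<lambda>\<theta>. wt \<alpha> (\<lambda>\<theta>. A (t + \<theta>)) \<theta> y)"
    by (rule lipschitz_on_transform)
  then show ?thesis by simp
qed

lemma history_weighted_lipschitz_present:
  assumes "0 \<le> \<alpha>" and t: "t \<in> {0..r}" and "0 \<le> M"
    and present: "\<And>s. s \<in> {0..r} \<Longrightarrow> \<bar>A s y\<bar> \<le> M"
    and present_lip: "K-lipschitz_on {0..r} (\<lambda>s. A s y)"
  shows "(\<alpha> * M + K)-lipschitz_on {-t..0} (\<lambda>\<theta>. wt \<alpha> (\<lambda>\<theta>. A (t + \<theta>)) \<theta> y)"
proof -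
  have exp_lip: "\<alpha>-lipschitz_on {-t..0} (\<lambda>\<theta>. exp (\<alpha> * \<theta>))"
    by (rule lipschitz_on_subset[OF lipschitz_on_exp_scaled[OF \<open>0 \<le> \<alpha>\<close>]]) auto
  have "(\<lambda>\<theta>. t + \<theta>) ` {-t..0} \<subseteq> {0..r}" using t by auto
  then have A_lip: "(K * 1)-lipschitz_on {-t..0} (\<lambda>\<theta>. A (t + \<theta>) y)"
    by (rule lipschitz_on_compose2[OF lipschitz_on_translate lipschitz_on_subset[OF present_lip]])
  have "\<bar>exp (\<alpha> * \<theta>)\<bar> \<le> 1" "\<bar>A (t + \<theta>) y\<bar> \<le> M" if "\<theta> \<in> {-t..0}" for \<theta>
    using that t \<open>0 \<le> \<alpha>\<close> present[of "t + \<theta>"] by (auto simp: mult_nonneg_nonpos)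
  then have "(\<alpha> * M + 1 * (K * 1))-lipschitz_on {-t..0} (\<lambda>\<theta>. exp (\<alpha> * \<theta>) * A (t + \<theta>) y)"
    using \<open>0 \<le> M\<close> by (intro lipschitz_on_mult_bounded[OF exp_lip A_lip]) auto
  moreover have "wt \<alpha> (\<lambda>\<theta>. A (t + \<theta>)) \<theta> y = exp (\<alpha> * \<theta>) * A (t + \<theta>) y"
    if "\<theta> \<in> {-t..0}" for \<theta>
    using that by (simp add: wt_nonpos)
  ultimately have "(\<alpha> * M + 1 * (K * 1))-lipschitz_on {-t..0} (\<lambda>\<theta>. wt \<alpha> (\<lambda>\<theta>. A (t + \<theta>)) \<theta> y)"
    by (rule lipschitz_on_transform)
  then show ?thesis by simp
qed

lemma history_weighted_lipschitz:
  assumes "0 \<le> \<alpha>" and t: "t \<in> {0..r}"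
    and past: "M0-lipschitz_on {..0} (\<lambda>\<theta>. wt \<alpha> A \<theta> y)"
    and present: "\<And>s. s \<in> {0..r} \<Longrightarrow> \<bar>A s y\<bar> \<le> M"
    and present_lip: "K-lipschitz_on {0..r} (\<lambda>s. A s y)"
  shows "(M0 + \<alpha> * M + K)-lipschitz_on {..0} (\<lambda>\<theta>. wt \<alpha> (\<lambda>\<theta>. A (t + \<theta>)) \<theta> y)"
proof (rule lipschitz_on_glue[where c = "- t"])
  have "0 \<le> M0" "0 \<le> K" "0 \<le> M"
    using lipschitz_on_nonneg[OF past] lipschitz_on_nonneg[OF present_lip] present[OF t] by auto
  then have le: "M0 \<le> M0 + \<alpha> * M + K" "\<alpha> * M + K \<le> M0 + \<alpha> * M + K"
    using \<open>0 \<le> \<alpha>\<close> by auto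
  have "M0-lipschitz_on {..-t} (\<lambda>\<theta>. wt \<alpha> (\<lambda>\<theta>. A (t + \<theta>)) \<theta> y)"
    using \<open>0 \<le> \<alpha>\<close> t by (intro history_weighted_lipschitz_past[OF _ _ past]) auto
  then show "(M0 + \<alpha> * M + K)-lipschitz_on {..-t} (\<lambda>\<theta>. wt \<alpha> (\<lambda>\<theta>. A (t + \<theta>)) \<theta> y)"
    by (rule lipschitz_on_le) (rule le(1))
  have "(\<alpha> * M + K)-lipschitz_on {-t..0} (\<lambda>\<theta>. wt \<alpha> (\<lambda>\<theta>. A (t + \<theta>)) \<theta> y)"
    using \<open>0 \<le> \<alpha>\<close> t \<open>0 \<le> M\<close> present present_lip
    by (rule history_weighted_lipschitz_present)
  then show "(M0 + \<alpha> * M + K)-lipschitz_on {-t..0} (\<lambda>\<theta>. wt \<alpha> (\<lambda>\<theta>. A (t + \<theta>)) \<theta> y)"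
    by (rule lipschitz_on_le) (rule le(2))
qed

lemma history_in_Lip:
  assumes "0 \<le> \<alpha>" and A: "cont_sup \<Omega> {..r} A" and t: "t \<in> {0..r}"
    and "M0 \<le> M" "0 \<le> M0" "0 \<le> K"
    and past: "\<And>\<theta> y. \<theta> \<le> 0 \<Longrightarrow> y \<in> \<Omega> \<Longrightarrow> \<bar>wt \<alpha> A \<theta> y\<bar> \<le> M0"
    and past_lip: "\<And>y. y \<in> \<Omega> \<Longrightarrow> M0-lipschitz_on {..0} (\<lambda>\<theta>. wt \<alpha> A \<theta> y)"
    and present: "\<And>s y. s \<in> {0..r} \<Longrightarrow> y \<in> \<Omega> \<Longrightarrow> \<bar>A s y\<bar> \<le> M"
    and present_lip: "\<And>y. y \<in> \<Omega> \<Longrightarrow> K-lipschitz_on {0..r} (\<lambda>s. A s y)"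
  shows "in_Lip \<Omega> \<alpha> (\<lambda>\<theta>. A (t + \<theta>)) \<and> Lip_norm \<Omega> \<alpha> (\<lambda>\<theta>. A (t + \<theta>)) \<le> M + (M0 + \<alpha> * M + K)"
proof (rule in_Lip_Lip_norm_le)
  show "cont_sup \<Omega> {..0} (\<lambda>\<theta>. A (t + \<theta>))"
    using A t by (intro cont_sup_shift) auto
  show "0 \<le> M" "0 \<le> M0 + \<alpha> * M + K"
    using assms(4-6) \<open>0 \<le> \<alpha>\<close> by auto
  show "\<bar>wt \<alpha> (\<lambda>\<theta>. A (t + \<theta>)) \<theta> y\<bar> \<le> M" if "\<theta> \<le> 0" "y \<in> \<Omega>" for \<theta> y
    using past present that by (intro history_weighted_bound[OF \<open>0 \<le> \<alpha>\<close> t that(1) \<open>M0 \<le> M\<close>]) auto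
  show "(M0 + \<alpha> * M + K)-lipschitz_on {..0} (\<lambda>\<theta>. wt \<alpha> (\<lambda>\<theta>. A (t + \<theta>)) \<theta> y)"
    if "y \<in> \<Omega>" for y
    using that past_lip present present_lip by (intro history_weighted_lipschitz[OF \<open>0 \<le> \<alpha>\<close> t]) auto
qed

lemma initial_data_bounds:
  fixes \<Omega> :: "'b::metric_space set"
  assumes \<Omega>: "compact \<Omega>" and \<phi>: "in_Lip \<Omega> \<alpha> \<phi>" and \<tau>0: "continuous_on \<Omega> \<tau>0"
    and norm: "Lip_norm \<Omega> \<alpha> \<phi> + supnorm \<Omega> \<tau>0 \<le> M0"
    and sol: "is_solution \<Omega> F f \<phi> \<tau>0 r A \<tau>"
  shows "\<theta> \<le> 0 \<Longrightarrow> y \<in> \<Omega> \<Longrightarrow> \<bar>wt \<alpha> A \<theta> y\<bar> \<le> M0"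
    and "y \<in> \<Omega> \<Longrightarrow> M0-lipschitz_on {..0} (\<lambda>\<theta>. wt \<alpha> A \<theta> y)"
    and "y \<in> \<Omega> \<Longrightarrow> \<tau>0 y \<le> M0"
proof -
  have wt_eq: "wt \<alpha> A \<theta> y = wt \<alpha> \<phi> \<theta> y" if "\<theta> \<le> 0" "y \<in> \<Omega>" for \<theta> y
    using sol that unfolding is_solution_def by (simp add: wt_def)
  have N: "Lip_norm \<Omega> \<alpha> \<phi> \<le> M0" "supnorm \<Omega> \<tau>0 \<le> M0"
    using norm Lip_norm_bounds(1)[OF \<Omega> \<phi>] supnorm_nonneg[OF \<Omega> \<tau>0] by auto
  show "\<bar>wt \<alpha> A \<theta> y\<bar> \<le> M0" if "\<theta> \<le> 0" "y \<in> \<Omega>"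
    using Lip_norm_bounds(2)[OF \<Omega> \<phi> that] wt_eq[OF that] N(1) by simp
  show "M0-lipschitz_on {..0} (\<lambda>\<theta>. wt \<alpha> A \<theta> y)" if "y \<in> \<Omega>"
  proof (rule lipschitz_on_le[OF _ N(1)])
    show "(Lip_norm \<Omega> \<alpha> \<phi>)-lipschitz_on {..0} (\<lambda>\<theta>. wt \<alpha> A \<theta> y)"
      by (rule lipschitz_on_transform[OF Lip_norm_bounds(3)[OF \<Omega> \<phi> that]]) (simp add: wt_eq that)
  qed
  show "\<tau>0 y \<le> M0" if "y \<in> \<Omega>"
    using abs_le_supnorm[OF \<Omega> \<tau>0 that] N(2) by linarith
qed

lemma solution_integrand_bounded_by_data:
  fixes \<Omega> :: "'b::metric_space set"
  assumes \<Omega>: "compact \<Omega>" and f: "f_ok \<Omega> f Mf" and \<tau>0: "\<forall>x\<in>\<Omega>. 0 \<le> \<tau>0 x"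
    and sol: "is_solution \<Omega> F f \<phi> \<tau>0 r A \<tau>" and "0 \<le> \<alpha>" and "0 < r"
    and F: "F_ball_bound \<Omega> F B K"
    and past: "\<And>\<theta> y. \<theta> \<le> 0 \<Longrightarrow> y \<in> \<Omega> \<Longrightarrow> \<bar>wt \<alpha> A \<theta> y\<bar> \<le> M0"
    and \<tau>0_le: "\<And>y. y \<in> \<Omega> \<Longrightarrow> \<tau>0 y \<le> M0"
    and present: "\<And>s y. s \<in> {0..r} \<Longrightarrow> y \<in> \<Omega> \<Longrightarrow> \<bar>A s y\<bar> \<le> M"
    and B: "r + M0 + max M (M0 * exp (\<alpha> * M0)) \<le> B"
    and l: "l \<in> {0..r}" and x: "x \<in> \<Omega>"
  shows "\<bar>F (A l) (\<tau> l) (\<lambda>p. A (l - \<tau> l (fst p)) (snd p)) x\<bar> \<le> K"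
proof (rule solution_integrand_bounded[where D = M0, OF \<Omega> sol F _ _ _ _ l x])
  have "0 \<le> M0" "0 \<le> M"
    using past[of 0 x] present[OF l x] x by auto
  then show "0 \<le> B" "r + M0 \<le> B"
    using B \<open>0 < r\<close> by auto
  show "\<bar>A s y\<bar> \<le> B" if "s \<in> {-M0..r}" "y \<in> \<Omega>" for s y
  proof -
    have "\<bar>A s y\<bar> \<le> max M (M0 * exp (\<alpha> * M0))"
      using past present that by (intro history_bound[OF \<open>0 \<le> \<alpha>\<close>]) auto
    then show ?thesis using B \<open>0 < r\<close> \<open>0 \<le> M0\<close> by linarith
  qed
  have "A s y \<le> M" if "s \<in> {0..r}" "y \<in> \<Omega>" for s y
    using present[OF that] by simp
  then show "\<tau> l' y \<le> l' + M0" if "l' \<in> {0..r}" "y \<in> \<Omega>" for l' y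
    using solution_delay_bound[OF \<Omega> f \<tau>0 sol _ \<open>0 < r\<close> that] \<tau>0_le[OF that(2)] by fastforce
qed

theorem corollary4p5:
  fixes \<Omega> :: "'a::euclidean_space set"
    and F :: "('a \<Rightarrow> real) \<Rightarrow> ('a \<Rightarrow> real) \<Rightarrow> ('a \<times> 'a \<Rightarrow> real) \<Rightarrow> ('a \<Rightarrow> real)"
    and f :: "('a \<Rightarrow> real) \<Rightarrow> ('a \<Rightarrow> real)"
    and \<alpha> Mf M0 M r :: real
  assumes "compact \<Omega>"
    and "\<alpha> \<ge> 0"
    and "F_ok \<Omega> F"
    and "f_ok \<Omega> f Mf"
    and "0 < M0" and "M0 < M" and "0 < r"
  shows "\<exists>Mhat > M. \<forall>\<phi> \<tau>0 A \<tau>.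
           in_Lip \<Omega> \<alpha> \<phi> \<longrightarrow>
           continuous_on \<Omega> \<tau>0 \<longrightarrow> (\<forall>x\<in>\<Omega>. 0 \<le> \<tau>0 x) \<longrightarrow>
           Lip_norm \<Omega> \<alpha> \<phi> + supnorm \<Omega> \<tau>0 \<le> M0 \<longrightarrow>
           is_solution \<Omega> F f \<phi> \<tau>0 r A \<tau> \<longrightarrow>
           (\<forall>t\<in>{0..r}. supnorm \<Omega> (A t) \<le> M) \<longrightarrow>
           (\<forall>t\<in>{0..r}. in_Lip \<Omega> \<alpha> (\<lambda>\<theta>. A (t + \<theta>)) \<and>
                        Lip_norm \<Omega> \<alpha> (\<lambda>\<theta>. A (t + \<theta>)) \<le> Mhat)"
proof -
  note \<Omega> = assms(1) and M = assms(5-7)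
  define B where "B = r + M0 + max M (M0 * exp (\<alpha> * M0))"
  have "0 \<le> B" using M unfolding B_def by linarith
  then obtain K where "0 \<le> K" and F_bounded: "F_ball_bound \<Omega> F B K"
    using F_ok_bounded[OF \<Omega> assms(3)] by blast
  show ?thesis
  proof (intro exI[of _ "M + (M0 + \<alpha> * M + K) + 1"] conjI allI impI ballI)
    show "M < M + (M0 + \<alpha> * M + K) + 1"
      using M \<open>0 \<le> K\<close> \<open>0 \<le> \<alpha>\<close> by (simp add: add_pos_nonneg)
    fix \<phi> \<tau>0 A \<tau> t
    assume \<phi>: "in_Lip \<Omega> \<alpha> \<phi>" and \<tau>0: "continuous_on \<Omega> \<tau>0" "\<forall>x\<in>\<Omega>. 0 \<le> \<tau>0 x"
      and norm: "Lip_norm \<Omega> \<alpha> \<phi> + supnorm \<Omega> \<tau>0 \<le> M0"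
      and sol: "is_solution \<Omega> F f \<phi> \<tau>0 r A \<tau>"
      and A_sup: "\<forall>t\<in>{0..r}. supnorm \<Omega> (A t) \<le> M" and t: "t \<in> {0..r}"
    have A: "cont_sup \<Omega> {..r} A"
      using sol unfolding is_solution_def by blast
    note initial = initial_data_bounds[OF \<Omega> \<phi> \<tau>0(1) norm sol]
    have present: "\<bar>A s y\<bar> \<le> M" if "s \<in> {0..r}" "y \<in> \<Omega>" for s y
      using abs_le_supnorm[OF \<Omega> cont_sup_continuous_on[OF A] that(2)] A_sup that by fastforce
    have "K-lipschitz_on {0..r} (\<lambda>s. A s y)" if "y \<in> \<Omega>" for y
      using solution_integrand_bounded_by_data[OF \<Omega> assms(4) \<tau>0(2) sol \<open>0 \<le> \<alpha>\<close> M(3) F_bounded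
          initial(1) initial(3) present, unfolded B_def]
      by (intro solution_lipschitz[OF sol _ \<open>0 \<le> K\<close> that]) (auto simp: that)
    then have "in_Lip \<Omega> \<alpha> (\<lambda>\<theta>. A (t + \<theta>)) \<and>
        Lip_norm \<Omega> \<alpha> (\<lambda>\<theta>. A (t + \<theta>)) \<le> M + (M0 + \<alpha> * M + K)"
      using M initial present \<open>0 \<le> K\<close>
      by (intro history_in_Lip[OF \<open>0 \<le> \<alpha>\<close> A t]) auto
    then show "in_Lip \<Omega> \<alpha> (\<lambda>\<theta>. A (t + \<theta>))"
      and "Lip_norm \<Omega> \<alpha> (\<lambda>\<theta>. A (t + \<theta>)) \<le> M + (M0 + \<alpha> * M + K) + 1"
      by auto
  qed
qed

end
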